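(* Let $U,V$ be Banach spaces, $L=L(V,U)$ the space of bounded linear maps with operator norm, $T>0$, $\alpha\in(0,1]$, $\beta\in(0,1]$, and let $F:[0,T]\times C^{\alpha}([0,T],U)\to L$ be non-anticipating and $(\alpha,\beta)$-Hölder continuous with constants $c_{\alpha,\beta},\tilde c_{\alpha,\beta}$. Fix $0\le t_0\le t_1\le T$. Then for every $Y,Z\in C^{\alpha}([0,t_1],U)$, $$\|F(\cdot,Y)\|_{\alpha\beta;[t_0,t_1]}\le c_{\alpha,\beta}\left(1+\|Y\|_{\alpha;[t_0,t_1]}^{\beta}\right).$$ Moreover, if $\|Y\|_{\alpha;[t_0,t_1]}\le R$ and $\|Z\|_{\alpha;[t_0,t_1]}\le R$, then for every $\theta\in(0,1)$, $$\|F(\cdot,Y)-F(\cdot,Z)\|_{\alpha\beta\theta;[t_0,t_1]}\le 2\,\tilde c_{\alpha,\beta}^{1-\theta}c_{\alpha,\beta}^{\theta}(1+R^{\beta})^{\theta}\left(\|Y-Z\|_{\alpha;[0,t_1]}+|Y_0-Z_0|\right)^{\beta(1-\theta)}.$$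
   Context: For a path $Z$ on an interval $I$, $\|Z\|_{\alpha;I}:=\sup_{s,t\in I,s\neq t}|Z_t-Z_s|/|t-s|^{\alpha}$; $C^{\alpha}(I,U)$ denotes paths with finite such seminorm. For $Y\in C([0,T],U)$ and $t\in[0,T]$ put $\mathcal{Y}_t(x):=Y_{t\wedge x}$. $F$ is non-anticipating if $F(t,Y)=F(t,\mathcal{Y}_t)$ for all $t,Y$; for a path $Y$ defined only on $[0,t_1]$ and $t\le t_1$, $F(t,Y)$ means $F(t,\bar Y)$ for any extension $\bar Y\in C^\alpha([0,T],U)$ (e.g. constant after $t_1$), which is well defined by non-anticipation. $F$ is $(\alpha,\beta)$-Hölder continuous if there are constants $c_{\alpha,\beta},\tilde c_{\alpha,\beta}\ge0$ such that for all $Y,\tilde Y\in C^{\alpha}([0,T],U)$ and $s,t\in[0,T]$: $|F(t,Y)-F(s,Y)|\le c_{\alpha,\beta}(1+\|Y\|_{\alpha;[s\wedge t,s\vee t]}^{\beta})|t-s|^{\alpha\beta}$ and $|F(s,Y)-F(s,\tilde Y)|\le\tilde c_{\alpha,\beta}(\|Y-\tilde Y\|_{\alpha;[0,s]}+|Y_0-\tilde Y_0|)^{\beta}$. *)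

theory Defs
  imports "HOL-Analysis.Analysis"
begin

definition hquot :: "real \<Rightarrow> real set \<Rightarrow> (real \<Rightarrow> 'a::real_normed_vector) \<Rightarrow> real set" where
  "hquot a I Z = {norm (Z t - Z s) / \<bar>t - s\<bar> powr a | s t. s \<in> I \<and> t \<in> I \<and> s \<noteq> t}"

definition holder :: "real \<Rightarrow> real set \<Rightarrow> (real \<Rightarrow> 'a::real_normed_vector) \<Rightarrow> bool" where
  "holder a I Z \<longleftrightarrow> bdd_above (hquot a I Z)"

text \<open>The Hoelder seminorm (sup over the empty set taken as 0).\<close>
definition hsemi :: "real \<Rightarrow> real set \<Rightarrow> (real \<Rightarrow> 'a::real_normed_vector) \<Rightarrow> real" where
  "hsemi a I Z = Sup ({0} \<union> hquot a I Z)"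

text \<open>A path given on [0,t1] extended constantly (paths are regarded as functions on [0,T];
  values outside are normalised by clipping).\<close>
definition pext :: "real \<Rightarrow> (real \<Rightarrow> 'a) \<Rightarrow> real \<Rightarrow> 'a" where
  "pext t1 Y = (\<lambda>x. Y (max 0 (min t1 x)))"

text \<open>Non-anticipating: F(t,Y) = F(t, Y_{t \<and> .}); the clipping at 0 expresses that F only
  sees the path on [0,T].\<close>
definition non_anticipating ::
  "real \<Rightarrow> real \<Rightarrow> (real \<Rightarrow> (real \<Rightarrow> 'u::real_normed_vector) \<Rightarrow> 'l) \<Rightarrow> bool" where
  "non_anticipating a T F \<longleftrightarrow>
     (\<forall>t\<in>{0..T}. \<forall>Y. holder a {0..T} Y \<longrightarrow> F t Y = F t (pext t Y))"

definition holder_cont ::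
  "real \<Rightarrow> real \<Rightarrow> real \<Rightarrow> real \<Rightarrow> real \<Rightarrow>
   (real \<Rightarrow> (real \<Rightarrow> 'u::real_normed_vector) \<Rightarrow> 'l::real_normed_vector) \<Rightarrow> bool" where
  "holder_cont a b T c ct F \<longleftrightarrow> c \<ge> 0 \<and> ct \<ge> 0 \<and>
     (\<forall>Y Y'. holder a {0..T} Y \<longrightarrow> holder a {0..T} Y' \<longrightarrow>
       (\<forall>s\<in>{0..T}. \<forall>t\<in>{0..T}.
          norm (F t Y - F s Y) \<le> c * (1 + hsemi a {min s t..max s t} Y powr b) * \<bar>t - s\<bar> powr (a * b)
        \<and> norm (F s Y - F s Y') \<le> ct * (hsemi a {0..s} (\<lambda>x. Y x - Y' x) + norm (Y 0 - Y' 0)) powr b))"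

end

theory Submission imports Defs begin

text \<open>The first estimate is the time-Hoelder condition on F, after noting that the constant
  extension does not change the seminorm of Y on subintervals of [t0,t1]. For the second,
  the increments of F(.,Y) - F(.,Z) are bounded twice: by 2c(1+R^\<beta>)|t-s|^(\<alpha>\<beta>) through the
  first estimate, and by twice the sup-norm ct E^\<beta> through the path-Lipschitz condition, where
  E = ||Y-Z||_\<alpha>;[0,t1] + |Y_0-Z_0|. Interpolating, min(a,b) \<le> a^\<theta> b^(1-\<theta>), gives the claim.\<close>

lemma hsemi_nonneg: "holder a I Z \<Longrightarrow> 0 \<le> hsemi a I Z"
  unfolding hsemi_def holder_def by (intro cSup_upper) auto

lemma norm_diff_le_hsemi:
  assumes "holder a I Z" "s \<in> I" "t \<in> I" "s \<noteq> t"
  shows "norm (Z t - Z s) \<le> hsemi a I Z * \<bar>t - s\<bar> powr a"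
proof -
  have "norm (Z t - Z s) / \<bar>t - s\<bar> powr a \<in> hquot a I Z"
    unfolding hquot_def using assms by blast
  moreover have "bdd_above ({0} \<union> hquot a I Z)" using assms(1) unfolding holder_def by simp
  ultimately have "norm (Z t - Z s) / \<bar>t - s\<bar> powr a \<le> hsemi a I Z"
    unfolding hsemi_def by (intro cSup_upper) auto
  moreover have "\<bar>t - s\<bar> powr a > 0" using assms by simp
  ultimately show ?thesis by (simp add: divide_le_eq)
qed

lemma holder_hsemi_le_of_bound:
  assumes "K \<ge> 0"
    and "\<And>s t. s \<in> I \<Longrightarrow> t \<in> I \<Longrightarrow> s \<noteq> t \<Longrightarrow> norm (Z t - Z s) \<le> K * \<bar>t - s\<bar> powr a"
  shows "holder a I Z \<and> hsemi a I Z \<le> K"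
proof -
  have le_K: "q \<le> K" if q: "q \<in> hquot a I Z" for q
  proof -
    obtain s t where st: "s \<in> I" "t \<in> I" "s \<noteq> t" "q = norm (Z t - Z s) / \<bar>t - s\<bar> powr a"
      using q unfolding hquot_def by auto
    have "\<bar>t - s\<bar> powr a > 0" using st by simp
    then show ?thesis using assms(2)[OF st(1-3)] st(4) by (simp add: divide_le_eq)
  qed
  then have "holder a I Z" unfolding holder_def bdd_above_def by blast
  moreover have "hsemi a I Z \<le> K"
    unfolding hsemi_def using le_K assms(1) by (intro cSup_least) auto
  ultimately show ?thesis by blast
qed

lemma holder_subset:
  assumes "holder a I Z" "J \<subseteq> I"
  shows "holder a J Z \<and> hsemi a J Z \<le> hsemi a I Z"
  using hsemi_nonneg[OF assms(1)] norm_diff_le_hsemi[OF assms(1)] assms(2)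
  by (intro holder_hsemi_le_of_bound) auto

lemma hsemi_cong: "(\<And>x. x \<in> I \<Longrightarrow> Z x = Z' x) \<Longrightarrow> hsemi a I Z = hsemi a I Z'"
  unfolding hsemi_def hquot_def by (metis (no_types, lifting))

lemma holder_diff:
  assumes "holder a I Y" "holder a I Z"
  shows "holder a I (\<lambda>x. Y x - Z x) \<and> hsemi a I (\<lambda>x. Y x - Z x) \<le> hsemi a I Y + hsemi a I Z"
proof (rule holder_hsemi_le_of_bound)
  show "0 \<le> hsemi a I Y + hsemi a I Z"
    using hsemi_nonneg[OF assms(1)] hsemi_nonneg[OF assms(2)] by simp
  fix s t assume st: "s \<in> I" "t \<in> I" "s \<noteq> t"
  have "norm ((Y t - Z t) - (Y s - Z s)) \<le> norm (Y t - Y s) + norm (Z t - Z s)"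
    using norm_triangle_ineq4[of "Y t - Y s" "Z t - Z s"] by (simp add: algebra_simps)
  then show "norm ((Y t - Z t) - (Y s - Z s)) \<le> (hsemi a I Y + hsemi a I Z) * \<bar>t - s\<bar> powr a"
    using norm_diff_le_hsemi[OF assms(1) st] norm_diff_le_hsemi[OF assms(2) st]
    by (simp add: distrib_right)
qed

lemma holder_pext:
  assumes "holder a {0..t1} Y" "a \<ge> 0" "t1 \<ge> 0"
  shows "holder a S (pext t1 Y)"
proof -
  have "norm (pext t1 Y t - pext t1 Y s) \<le> hsemi a {0..t1} Y * \<bar>t - s\<bar> powr a" for s t
  proof (cases "max 0 (min t1 s) = max 0 (min t1 t)")
    case True
    then show ?thesis using hsemi_nonneg[OF assms(1)] by (simp add: pext_def)
  next
    case False
    then have "norm (pext t1 Y t - pext t1 Y s)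
        \<le> hsemi a {0..t1} Y * \<bar>max 0 (min t1 t) - max 0 (min t1 s)\<bar> powr a"
      unfolding pext_def using assms by (intro norm_diff_le_hsemi) auto
    also have "\<dots> \<le> hsemi a {0..t1} Y * \<bar>t - s\<bar> powr a"
      using hsemi_nonneg[OF assms(1)] assms by (intro mult_left_mono powr_mono2) auto
    finally show ?thesis .
  qed
  then show ?thesis using holder_hsemi_le_of_bound hsemi_nonneg[OF assms(1)] by blast
qed

lemma le_powr_interpolate:
  fixes x A B \<theta> :: real
  assumes "0 \<le> x" "x \<le> A" "x \<le> B" "0 < \<theta>" "\<theta> < 1"
  shows "x \<le> A powr \<theta> * B powr (1 - \<theta>)"
proof (cases "x = 0")
  case False
  then have "x = x powr \<theta> * x powr (1 - \<theta>)" using assms by (simp add: powr_add[symmetric])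
  also have "\<dots> \<le> A powr \<theta> * B powr (1 - \<theta>)"
    using assms by (intro mult_mono powr_mono2) auto
  finally show ?thesis .
qed simp

lemma holder_interpolate_sup_bound:
  assumes "holder a I D" and sup: "\<And>t. t \<in> I \<Longrightarrow> norm (D t) \<le> B" and "0 < \<theta>" "\<theta> < 1"
  shows "holder (a * \<theta>) I D \<and> hsemi (a * \<theta>) I D \<le> hsemi a I D powr \<theta> * (2 * B) powr (1 - \<theta>)"
proof (rule holder_hsemi_le_of_bound)
  fix s t assume st: "s \<in> I" "t \<in> I" "s \<noteq> t"
  have "norm (D t - D s) \<le> norm (D t) + norm (D s)" by (rule norm_triangle_ineq4)
  then have "norm (D t - D s) \<le> 2 * B" using sup[OF st(1)] sup[OF st(2)] by linarith
  then have "norm (D t - D s) \<le> (hsemi a I D * \<bar>t - s\<bar> powr a) powr \<theta> * (2 * B) powr (1 - \<theta>)"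
    using le_powr_interpolate norm_diff_le_hsemi[OF assms(1) st] assms by simp
  also have "\<dots> = hsemi a I D powr \<theta> * (2 * B) powr (1 - \<theta>) * \<bar>t - s\<bar> powr (a * \<theta>)"
    using hsemi_nonneg[OF assms(1)] by (simp add: powr_mult powr_powr)
  finally show "norm (D t - D s) \<le> hsemi a I D powr \<theta> * (2 * B) powr (1 - \<theta>) * \<bar>t - s\<bar> powr (a * \<theta>)" .
qed simp

lemma holder_cont_holder_in_time:
  fixes F :: "real \<Rightarrow> (real \<Rightarrow> 'u::real_normed_vector) \<Rightarrow> 'l::real_normed_vector"
  assumes hc: "holder_cont a b T c ct F" and "a \<ge> 0" "b \<ge> 0"
    and "0 \<le> t0" "t0 \<le> t1" "t1 \<le> T" and Y: "holder a {0..t1} Y"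
  shows "holder (a * b) {t0..t1} (\<lambda>t. F t (pext t1 Y))
       \<and> hsemi (a * b) {t0..t1} (\<lambda>t. F t (pext t1 Y)) \<le> c * (1 + hsemi a {t0..t1} Y powr b)"
proof (rule holder_hsemi_le_of_bound)
  have c: "c \<ge> 0" using hc unfolding holder_cont_def by simp
  have Y': "holder a {t0..t1} Y" using holder_subset[OF Y] assms by auto
  then show "0 \<le> c * (1 + hsemi a {t0..t1} Y powr b)" using c by simp
  fix s t assume st: "s \<in> {t0..t1}" "t \<in> {t0..t1}"
  have sub: "0 \<le> hsemi a {min s t..max s t} Y" "hsemi a {min s t..max s t} Y \<le> hsemi a {t0..t1} Y"
    using holder_subset[OF Y', of "{min s t..max s t}"] hsemi_nonneg st by auto
  have "holder a {0..T} (pext t1 Y)" using holder_pext[OF Y] assms by simp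
  then have "norm (F t (pext t1 Y) - F s (pext t1 Y))
      \<le> c * (1 + hsemi a {min s t..max s t} (pext t1 Y) powr b) * \<bar>t - s\<bar> powr (a * b)"
    using hc st assms unfolding holder_cont_def by auto
  also have "hsemi a {min s t..max s t} (pext t1 Y) = hsemi a {min s t..max s t} Y"
    using st assms by (intro hsemi_cong) (auto simp: pext_def)
  also have "c * (1 + hsemi a {min s t..max s t} Y powr b) * \<bar>t - s\<bar> powr (a * b)
      \<le> c * (1 + hsemi a {t0..t1} Y powr b) * \<bar>t - s\<bar> powr (a * b)"
    using c sub assms by (intro mult_right_mono mult_left_mono add_left_mono powr_mono2) auto
  finally show "norm (F t (pext t1 Y) - F s (pext t1 Y))
      \<le> c * (1 + hsemi a {t0..t1} Y powr b) * \<bar>t - s\<bar> powr (a * b)" .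
qed

lemma holder_cont_holder_in_time_le:
  fixes F :: "real \<Rightarrow> (real \<Rightarrow> 'u::real_normed_vector) \<Rightarrow> 'l::real_normed_vector"
  assumes hc: "holder_cont a b T c ct F" and "a \<ge> 0" "b \<ge> 0"
    and "0 \<le> t0" "t0 \<le> t1" "t1 \<le> T" and Y: "holder a {0..t1} Y"
    and R: "hsemi a {t0..t1} Y \<le> R"
  shows "holder (a * b) {t0..t1} (\<lambda>t. F t (pext t1 Y))
       \<and> hsemi (a * b) {t0..t1} (\<lambda>t. F t (pext t1 Y)) \<le> c * (1 + R powr b)"
proof -
  have "hsemi a {t0..t1} Y powr b \<le> R powr b"
    using holder_subset[OF Y, of "{t0..t1}"] hsemi_nonneg R assms by (intro powr_mono2) auto
  then have "c * (1 + hsemi a {t0..t1} Y powr b) \<le> c * (1 + R powr b)"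
    using hc unfolding holder_cont_def by (intro mult_left_mono) auto
  then show ?thesis using holder_cont_holder_in_time[OF hc assms(2-7)] by linarith
qed

lemma holder_cont_norm_diff_le:
  fixes F :: "real \<Rightarrow> (real \<Rightarrow> 'u::real_normed_vector) \<Rightarrow> 'l::real_normed_vector"
  assumes hc: "holder_cont a b T c ct F" and "a \<ge> 0" "b \<ge> 0" "t1 \<le> T"
    and Y: "holder a {0..t1} Y" and Z: "holder a {0..t1} Z" and s: "s \<in> {0..t1}"
  shows "norm (F s (pext t1 Y) - F s (pext t1 Z))
       \<le> ct * (hsemi a {0..t1} (\<lambda>x. Y x - Z x) + norm (Y 0 - Z 0)) powr b"
proof -
  have "holder a {0..T} (pext t1 Y)" "holder a {0..T} (pext t1 Z)" "s \<in> {0..T}"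
    using holder_pext[OF Y] holder_pext[OF Z] s assms by auto
  then have "norm (F s (pext t1 Y) - F s (pext t1 Z))
      \<le> ct * (hsemi a {0..s} (\<lambda>x. pext t1 Y x - pext t1 Z x) + norm (pext t1 Y 0 - pext t1 Z 0)) powr b"
    using hc unfolding holder_cont_def by blast
  also have "hsemi a {0..s} (\<lambda>x. pext t1 Y x - pext t1 Z x) = hsemi a {0..s} (\<lambda>x. Y x - Z x)"
    using s by (intro hsemi_cong) (auto simp: pext_def)
  also have "norm (pext t1 Y 0 - pext t1 Z 0) = norm (Y 0 - Z 0)"
    using s by (simp add: pext_def)
  also have "ct * (hsemi a {0..s} (\<lambda>x. Y x - Z x) + norm (Y 0 - Z 0)) powr b
      \<le> ct * (hsemi a {0..t1} (\<lambda>x. Y x - Z x) + norm (Y 0 - Z 0)) powr b"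
  proof -
    have "holder a {0..s} (\<lambda>x. Y x - Z x)
        \<and> hsemi a {0..s} (\<lambda>x. Y x - Z x) \<le> hsemi a {0..t1} (\<lambda>x. Y x - Z x)"
      using holder_subset[OF holder_diff[OF Y Z, THEN conjunct1]] s by auto
    moreover have "0 \<le> hsemi a {0..s} (\<lambda>x. Y x - Z x)"
      using calculation hsemi_nonneg by blast
    ultimately show ?thesis using hc assms unfolding holder_cont_def
      by (intro mult_left_mono powr_mono2) auto
  qed
  finally show ?thesis .
qed

lemma holder_cont_holder_diff_in_time:
  fixes F :: "real \<Rightarrow> (real \<Rightarrow> 'u::real_normed_vector) \<Rightarrow> 'l::real_normed_vector"
  assumes hc: "holder_cont a b T c ct F" and "a \<ge> 0" "b \<ge> 0"
    and "0 \<le> t0" "t0 \<le> t1" "t1 \<le> T"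
    and Y: "holder a {0..t1} Y" and Z: "holder a {0..t1} Z"
    and R: "hsemi a {t0..t1} Y \<le> R" "hsemi a {t0..t1} Z \<le> R" and "0 < \<theta>" "\<theta> < 1"
  shows "holder (a * b * \<theta>) {t0..t1} (\<lambda>t. F t (pext t1 Y) - F t (pext t1 Z))
       \<and> hsemi (a * b * \<theta>) {t0..t1} (\<lambda>t. F t (pext t1 Y) - F t (pext t1 Z))
         \<le> 2 * ct powr (1 - \<theta>) * c powr \<theta> * (1 + R powr b) powr \<theta>
            * (hsemi a {0..t1} (\<lambda>x. Y x - Z x) + norm (Y 0 - Z 0)) powr (b * (1 - \<theta>))"
proof -
  define E where "E = hsemi a {0..t1} (\<lambda>x. Y x - Z x) + norm (Y 0 - Z 0)"
  define D where "D = (\<lambda>t. F t (pext t1 Y) - F t (pext t1 Z))"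
  have c: "c \<ge> 0" "ct \<ge> 0" using hc unfolding holder_cont_def by auto
  have "holder (a * b) {t0..t1} (\<lambda>t. F t (pext t1 Y))
      \<and> hsemi (a * b) {t0..t1} (\<lambda>t. F t (pext t1 Y)) \<le> c * (1 + R powr b)"
    and "holder (a * b) {t0..t1} (\<lambda>t. F t (pext t1 Z))
      \<and> hsemi (a * b) {t0..t1} (\<lambda>t. F t (pext t1 Z)) \<le> c * (1 + R powr b)"
    using holder_cont_holder_in_time_le[OF hc _ _ _ _ _ _ R(1)]
      holder_cont_holder_in_time_le[OF hc _ _ _ _ _ _ R(2)] Y Z assms by auto
  then have D: "holder (a * b) {t0..t1} D \<and> hsemi (a * b) {t0..t1} D \<le> 2 * c * (1 + R powr b)"
    using holder_diff[of "a * b" "{t0..t1}" "\<lambda>t. F t (pext t1 Y)" "\<lambda>t. F t (pext t1 Z)"]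
    unfolding D_def by auto
  have "norm (D t) \<le> ct * E powr b" if "t \<in> {t0..t1}" for t
    using holder_cont_norm_diff_le[OF hc _ _ _ Y Z] that assms unfolding D_def E_def by auto
  then have D\<theta>: "holder (a * b * \<theta>) {t0..t1} D
      \<and> hsemi (a * b * \<theta>) {t0..t1} D \<le> hsemi (a * b) {t0..t1} D powr \<theta> * (2 * (ct * E powr b)) powr (1 - \<theta>)"
    using holder_interpolate_sup_bound D assms by blast
  have "hsemi (a * b * \<theta>) {t0..t1} D \<le> hsemi (a * b) {t0..t1} D powr \<theta> * (2 * (ct * E powr b)) powr (1 - \<theta>)"
    using D\<theta> by blast
  also have "\<dots> \<le> (2 * c * (1 + R powr b)) powr \<theta> * (2 * (ct * E powr b)) powr (1 - \<theta>)"
    using D hsemi_nonneg assms by (intro mult_right_mono powr_mono2) auto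
  also have "\<dots> = (2 powr \<theta> * 2 powr (1 - \<theta>)) * ct powr (1 - \<theta>) * c powr \<theta> * (1 + R powr b) powr \<theta>
        * E powr (b * (1 - \<theta>))"
    using c by (simp add: powr_mult powr_powr)
  also have "2 powr \<theta> * 2 powr (1 - \<theta>) = (2::real)" by (simp add: powr_add[symmetric])
  finally show ?thesis using D\<theta> unfolding D_def E_def by simp
qed

theorem proposition4p10:
  fixes F :: "real \<Rightarrow> (real \<Rightarrow> 'u::banach) \<Rightarrow> ('v::banach \<Rightarrow>\<^sub>L 'u)"
    and T \<alpha> \<beta> c ct t0 t1 :: real
    and Y Z :: "real \<Rightarrow> 'u"
  assumes "T > 0" and "0 < \<alpha>" "\<alpha> \<le> 1" and "0 < \<beta>" "\<beta> \<le> 1"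
    and "non_anticipating \<alpha> T F"
    and "holder_cont \<alpha> \<beta> T c ct F"
    and "0 \<le> t0" "t0 \<le> t1" "t1 \<le> T"
    and "holder \<alpha> {0..t1} Y" "holder \<alpha> {0..t1} Z"
  shows "holder (\<alpha> * \<beta>) {t0..t1} (\<lambda>t. F t (pext t1 Y))
       \<and> hsemi (\<alpha> * \<beta>) {t0..t1} (\<lambda>t. F t (pext t1 Y)) \<le> c * (1 + hsemi \<alpha> {t0..t1} Y powr \<beta>)
       \<and> (\<forall>R \<theta>. hsemi \<alpha> {t0..t1} Y \<le> R \<longrightarrow> hsemi \<alpha> {t0..t1} Z \<le> R \<longrightarrow> 0 < \<theta> \<longrightarrow> \<theta> < 1 \<longrightarrow>
       holder (\<alpha> * \<beta> * \<theta>) {t0..t1} (\<lambda>t. F t (pext t1 Y) - F t (pext t1 Z))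
       \<and> hsemi (\<alpha> * \<beta> * \<theta>) {t0..t1} (\<lambda>t. F t (pext t1 Y) - F t (pext t1 Z))
         \<le> 2 * ct powr (1 - \<theta>) * c powr \<theta> * (1 + R powr \<beta>) powr \<theta>
            * (hsemi \<alpha> {0..t1} (\<lambda>x. Y x - Z x) + norm (Y 0 - Z 0)) powr (\<beta> * (1 - \<theta>)))"
proof -
  have "0 \<le> \<alpha>" "0 \<le> \<beta>" using assms by auto
  then show ?thesis
    using holder_cont_holder_in_time[OF assms(7) _ _ assms(8-11)]
      holder_cont_holder_diff_in_time[OF assms(7) _ _ assms(8-12)] by blast
qed
end
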